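(* Let $X$ be a non-empty set, $A$ a non-empty subset of $X$, and $f,g\in\mathcal T_X(A)$. Then in the semigroup $\mathcal T_X(A)$: (i) $f\,\mathscr L\,g$ iff $f=g$, or $\operatorname{im}(f)=\operatorname{im}(g)$ and $A$ saturates both $\ker(f)$ and $\ker(g)$; (ii) $f\,\mathscr R\,g$ iff $\ker(f)=\ker(g)$; (iii) $f\,\mathscr H\,g$ iff $f=g$, or $\operatorname{im}(f)=\operatorname{im}(g)$ and $A$ saturates $\ker(f)=\ker(g)$; (iv) $f\,\mathscr D\,g$ iff $\ker(f)=\ker(g)$, or $\operatorname{rank}(f)=\operatorname{rank}(g)$ and $A$ saturates both $\ker(f)$ and $\ker(g)$; (v) $f\,\mathscr J\,g$ iff $\ker(f)=\ker(g)$ or $|Af|=\operatorname{rank}(f)=\operatorname{rank}(g)=|Ag|$. Further, $\mathscr D=\mathscr J$ in $\mathcal T_X(A)$ if and only if $A$ is finite or $A=X$.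
   Context: $\mathcal T_X$ is the semigroup of all maps $X\to X$ (maps written on the right, composed left to right). $\mathcal T_X(A)=\{f\in\mathcal T_X:\operatorname{im}(f)\subseteq A\}$. $\ker(f)=\{(x,y):xf=yf\}$, $\operatorname{rank}(f)=|\operatorname{im}(f)|$, $Af=\{xf:x\in A\}$. A set $B$ saturates an equivalence $\sigma$ if every $\sigma$-class contains an element of $B$. Green's relations are computed within the semigroup $\mathcal T_X(A)$ ($x\,\mathscr L\,y$ iff $T^1x=T^1y$, etc., with $T=\mathcal T_X(A)$). *)

theory Defs
  imports Main "HOL-Library.Equipollence"
begin

text \<open>The ground set X is the universe of the type 'a (types are non-empty).
  Maps are written on the right and composed left to right:
  x (f g) = (x f) g.\<close>

definition TXA :: "'a set \<Rightarrow> ('a \<Rightarrow> 'a) set" where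
  "TXA A = {f. range f \<subseteq> A}"

definition tmult :: "('a \<Rightarrow> 'a) \<Rightarrow> ('a \<Rightarrow> 'a) \<Rightarrow> ('a \<Rightarrow> 'a)" where
  "tmult f g = (\<lambda>x. g (f x))"

definition kernel :: "('a \<Rightarrow> 'b) \<Rightarrow> ('a \<times> 'a) set" where
  "kernel f = {(x, y). f x = f y}"

definition saturates :: "'a set \<Rightarrow> ('a \<times> 'a) set \<Rightarrow> bool" where
  "saturates B \<sigma> \<longleftrightarrow> (\<forall>C \<in> UNIV // \<sigma>. C \<inter> B \<noteq> {})"

text \<open>Principal ideals in T^1 where T = TXA A.\<close>
definition idealL :: "'a set \<Rightarrow> ('a \<Rightarrow> 'a) \<Rightarrow> ('a \<Rightarrow> 'a) set" where
  "idealL A f = insert f {tmult h f | h. h \<in> TXA A}"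

definition idealR :: "'a set \<Rightarrow> ('a \<Rightarrow> 'a) \<Rightarrow> ('a \<Rightarrow> 'a) set" where
  "idealR A f = insert f {tmult f h | h. h \<in> TXA A}"

definition idealJ :: "'a set \<Rightarrow> ('a \<Rightarrow> 'a) \<Rightarrow> ('a \<Rightarrow> 'a) set" where
  "idealJ A f = idealL A f \<union> idealR A f
      \<union> {tmult (tmult h f) k | h k. h \<in> TXA A \<and> k \<in> TXA A}"

definition greenL :: "'a set \<Rightarrow> ('a \<Rightarrow> 'a) \<Rightarrow> ('a \<Rightarrow> 'a) \<Rightarrow> bool" where
  "greenL A f g \<longleftrightarrow> idealL A f = idealL A g"

definition greenR :: "'a set \<Rightarrow> ('a \<Rightarrow> 'a) \<Rightarrow> ('a \<Rightarrow> 'a) \<Rightarrow> bool" where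
  "greenR A f g \<longleftrightarrow> idealR A f = idealR A g"

definition greenH :: "'a set \<Rightarrow> ('a \<Rightarrow> 'a) \<Rightarrow> ('a \<Rightarrow> 'a) \<Rightarrow> bool" where
  "greenH A f g \<longleftrightarrow> greenL A f g \<and> greenR A f g"

definition greenD :: "'a set \<Rightarrow> ('a \<Rightarrow> 'a) \<Rightarrow> ('a \<Rightarrow> 'a) \<Rightarrow> bool" where
  "greenD A f g \<longleftrightarrow> (\<exists>h \<in> TXA A. greenL A f h \<and> greenR A h g)"

definition greenJ :: "'a set \<Rightarrow> ('a \<Rightarrow> 'a) \<Rightarrow> ('a \<Rightarrow> 'a) \<Rightarrow> bool" where
  "greenJ A f g \<longleftrightarrow> idealJ A f = idealJ A g"

end

theory Submission imports Defs begin

text \<open>In \<open>T = T\<^sub>X(A)\<close> the principal ideals are explicit: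
  \<open>T\<^sup>1f = {f} \<union> {k. im k \<subseteq> Af}\<close>, \<open>fT\<^sup>1 = {k \<in> T. ker f \<subseteq> ker k}\<close> and
  \<open>T\<^sup>1fT\<^sup>1 = fT\<^sup>1 \<union> {k \<in> T. rank k \<le> |Af|}\<close>. Each characterisation follows by comparing these
  sets, using that \<open>A\<close> saturates \<open>ker f\<close> iff \<open>Af = im f\<close>. When \<open>A\<close> is infinite and
  \<open>A \<noteq> X\<close>, a bijection \<open>A \<rightarrow> A - {a\<^sub>0}\<close> extended by \<open>X - A \<mapsto> a\<^sub>0\<close> is \<open>J\<close>- but not
  \<open>D\<close>-related to the identity on \<open>A\<close>; for \<open>A\<close> finite or \<open>A = X\<close>, \<open>|Af| = rank f\<close> already
  forces \<open>Af = im f\<close>, so the conditions for \<open>D\<close> and \<open>J\<close> coincide.\<close>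

lemma mem_TXA_iff: "f \<in> TXA A \<longleftrightarrow> (\<forall>x. f x \<in> A)"
  by (auto simp: TXA_def)

lemma saturates_kernel_iff: "saturates A (kernel f) \<longleftrightarrow> range f \<subseteq> f ` A"
proof -
  have classes: "UNIV // kernel f = {{y. f x = f y} | x. True}"
    by (auto simp: quotient_def kernel_def Image_def)
  show ?thesis
    unfolding saturates_def classes by (auto simp: image_def)
qed

lemma image_eqpoll_range_iff: "f ` A \<approx> range f \<longleftrightarrow> range f \<lesssim> f ` A"
  by (meson eqpoll_imp_lepoll eqpoll_sym lepoll_antisym subset_imp_lepoll image_mono subset_UNIV)

lemma kernel_subset_imp_image_lepoll:
  assumes "kernel f \<subseteq> kernel g"
  shows "g ` B \<lesssim> f ` B"
proof (rule subset_image_lepoll)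
  show "g ` B \<subseteq> (\<lambda>y. g (inv_into B f y)) ` f ` B"
  proof
    fix z assume "z \<in> g ` B"
    then obtain b where b: "b \<in> B" "z = g b" by blast
    have "f (inv_into B f (f b)) = f b"
      using b by (simp add: f_inv_into_f)
    then have "g (inv_into B f (f b)) = g b"
      using assms by (auto simp: kernel_def)
    then show "z \<in> (\<lambda>y. g (inv_into B f y)) ` f ` B"
      using b by force
  qed
qed

lemma kernel_eq_imp_image_eqpoll: "kernel f = kernel g \<Longrightarrow> f ` B \<approx> g ` B"
  by (simp add: kernel_subset_imp_image_lepoll lepoll_antisym)

lemma kernel_comp_inj_on:
  "inj_on \<phi> (range g) \<Longrightarrow> kernel (\<phi> \<circ> g) = kernel g"
  by (auto simp: kernel_def inj_on_eq_iff)

lemma obtain_range_kernel: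
  fixes g :: "'a \<Rightarrow> 'b"
  assumes "B \<approx> range g"
  obtains h :: "'a \<Rightarrow> 'b" where "range h = B" "kernel h = kernel g"
proof -
  obtain \<phi> where \<phi>: "bij_betw \<phi> (range g) B"
    using assms eqpoll_sym unfolding eqpoll_def by blast
  then have "range (\<phi> \<circ> g) = B"
    using bij_betw_imp_surj_on by (metis image_comp)
  moreover have "kernel (\<phi> \<circ> g) = kernel g"
    using \<phi> by (simp add: kernel_comp_inj_on bij_betw_def)
  ultimately show thesis by (rule that)
qed

lemma factor_through_image:
  fixes f k :: "'a \<Rightarrow> 'a"
  assumes "range k \<subseteq> f ` A"
  obtains h where "h \<in> TXA A" "tmult h f = k"
proof -
  have "\<forall>x. \<exists>a. a \<in> A \<and> f a = k x"
    using assms by (metis imageE rangeI subsetD)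
  then obtain h where "\<forall>x. h x \<in> A \<and> f (h x) = k x"
    by (rule choice[THEN exE])
  then show thesis
    by (intro that) (auto simp: mem_TXA_iff tmult_def)
qed

lemma factor_through_kernel:
  assumes "kernel f \<subseteq> kernel k" "a\<^sub>0 \<in> A" "range k \<subseteq> A"
  obtains h where "h \<in> TXA A" "tmult f h = k"
proof
  let ?h = "\<lambda>y. if y \<in> range f then k (inv f y) else a\<^sub>0"
  show "?h \<in> TXA A"
    using assms by (auto simp: mem_TXA_iff)
  have "k (inv f (f x)) = k x" for x
    using assms(1) f_inv_into_f[of "f x" f UNIV] by (auto simp: kernel_def)
  then show "tmult f ?h = k"
    by (simp add: tmult_def)
qed

definition kernel_ideal :: "'a set \<Rightarrow> ('a \<Rightarrow> 'a) \<Rightarrow> ('a \<Rightarrow> 'a) set" where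
  "kernel_ideal A f = {k. range k \<subseteq> A \<and> kernel f \<subseteq> kernel k}"

definition rank_ideal :: "'a set \<Rightarrow> ('a \<Rightarrow> 'a) \<Rightarrow> ('a \<Rightarrow> 'a) set" where
  "rank_ideal A f = {k. range k \<subseteq> A \<and> range k \<lesssim> f ` A}"

lemma self_mem_kernel_ideal: "f \<in> TXA A \<Longrightarrow> f \<in> kernel_ideal A f"
  by (auto simp: kernel_ideal_def TXA_def)

lemma idealL_eq:
  fixes f :: "'a \<Rightarrow> 'a"
  shows "idealL A f = insert f {k. range k \<subseteq> f ` A}"
proof -
  have "{tmult h f | h. h \<in> TXA A} = {k. range k \<subseteq> f ` A}"
  proof (intro equalityI subsetI)
    fix k :: "'a \<Rightarrow> 'a" assume "k \<in> {k. range k \<subseteq> f ` A}"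
    then obtain h where "h \<in> TXA A" "tmult h f = k"
      using factor_through_image by blast
    then show "k \<in> {tmult h f | h. h \<in> TXA A}" by blast
  qed (auto simp: tmult_def TXA_def)
  then show ?thesis
    by (simp add: idealL_def)
qed

lemma idealR_eq:
  assumes "A \<noteq> {}" "f \<in> TXA A"
  shows "idealR A f = kernel_ideal A f"
proof -
  obtain a\<^sub>0 where a\<^sub>0: "a\<^sub>0 \<in> A"
    using assms(1) by blast
  have "{tmult f h | h. h \<in> TXA A} = kernel_ideal A f"
  proof (intro equalityI subsetI)
    fix k assume "k \<in> kernel_ideal A f"
    then obtain h where "h \<in> TXA A" "tmult f h = k"
      using factor_through_kernel[OF _ a\<^sub>0] by (auto simp: kernel_ideal_def)
    then show "k \<in> {tmult f h | h. h \<in> TXA A}" by blast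
  qed (auto simp: kernel_ideal_def kernel_def tmult_def TXA_def)
  then show ?thesis
    using self_mem_kernel_ideal[OF assms(2)] by (auto simp: idealR_def)
qed

lemma two_sided_products_eq_rank_ideal:
  assumes "A \<noteq> {}"
  shows "{tmult (tmult h f) k | h k. h \<in> TXA A \<and> k \<in> TXA A} = rank_ideal A f"
proof (intro equalityI subsetI)
  fix m assume "m \<in> {tmult (tmult h f) k | h k. h \<in> TXA A \<and> k \<in> TXA A}"
  then obtain h k where hk: "h \<in> TXA A" "k \<in> TXA A" "m = tmult (tmult h f) k"
    by blast
  then have "range m \<subseteq> k ` f ` A"
    by (auto simp: tmult_def TXA_def)
  then show "m \<in> rank_ideal A f"
    using hk by (auto simp: rank_ideal_def tmult_def TXA_def intro: subset_image_lepoll)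
next
  fix m assume "m \<in> rank_ideal A f"
  then have m: "range m \<subseteq> A" "range m \<lesssim> f ` A"
    by (auto simp: rank_ideal_def)
  then obtain \<iota> where \<iota>: "inj_on \<iota> (range m)" "\<iota> ` range m \<subseteq> f ` A"
    unfolding lepoll_def by blast
  obtain a\<^sub>0 where a\<^sub>0: "a\<^sub>0 \<in> A"
    using assms by blast
  have "range (\<iota> \<circ> m) \<subseteq> f ` A"
    using \<iota>(2) by (simp add: image_comp)
  then obtain h where h: "h \<in> TXA A" "tmult h f = \<iota> \<circ> m"
    by (rule factor_through_image)
  define \<psi> where "\<psi> = (\<lambda>y. if y \<in> \<iota> ` range m then inv_into (range m) \<iota> y else a\<^sub>0)"
  have "\<psi> \<in> TXA A"
    using m(1) a\<^sub>0 by (auto simp: mem_TXA_iff \<psi>_def inv_into_into)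
  moreover have "tmult (tmult h f) \<psi> = m"
  proof
    fix x
    have "tmult (tmult h f) \<psi> x = \<psi> (\<iota> (m x))"
      using fun_cong[OF h(2), of x] by (simp add: tmult_def)
    also have "\<dots> = m x"
      using \<iota>(1) by (simp add: \<psi>_def)
    finally show "tmult (tmult h f) \<psi> x = m x" .
  qed
  ultimately show "m \<in> {tmult (tmult h f) k | h k. h \<in> TXA A \<and> k \<in> TXA A}"
    using h(1) by blast
qed

lemma idealJ_eq:
  assumes "A \<noteq> {}" "f \<in> TXA A"
  shows "idealJ A f = kernel_ideal A f \<union> rank_ideal A f"
proof -
  have "f ` A \<subseteq> A"
    using assms(2) by (auto simp: TXA_def)
  then have "{k. range k \<subseteq> f ` A} \<subseteq> rank_ideal A f"
    unfolding rank_ideal_def using subset_imp_lepoll by blast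
  then have "idealL A f \<subseteq> kernel_ideal A f \<union> rank_ideal A f"
    using self_mem_kernel_ideal[OF assms(2)] by (auto simp: idealL_eq)
  then show ?thesis
    unfolding idealJ_def idealR_eq[OF assms] two_sided_products_eq_rank_ideal[OF assms(1)]
    by blast
qed

lemma greenL_iff:
  "greenL A f g \<longleftrightarrow>
     f = g \<or> (range f = range g \<and> saturates A (kernel f) \<and> saturates A (kernel g))"
  unfolding greenL_def idealL_eq saturates_kernel_iff
proof
  assume E: "insert f {k. range k \<subseteq> f ` A} = insert g {k. range k \<subseteq> g ` A}"
  show "f = g \<or> range f = range g \<and> range f \<subseteq> f ` A \<and> range g \<subseteq> g ` A"
  proof (cases "f = g")
    case False
    with E have "range g \<subseteq> f ` A" "range f \<subseteq> g ` A"
      by (metis insertCI insertE mem_Collect_eq)+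
    then show ?thesis
      by blast
  qed simp
next
  assume "f = g \<or> range f = range g \<and> range f \<subseteq> f ` A \<and> range g \<subseteq> g ` A"
  then show "insert f {k. range k \<subseteq> f ` A} = insert g {k. range k \<subseteq> g ` A}"
  proof
    assume H: "range f = range g \<and> range f \<subseteq> f ` A \<and> range g \<subseteq> g ` A"
    then have "f ` A = range f" "g ` A = range f"
      by auto
    then show ?thesis
      using H by (auto simp: insert_absorb)
  qed simp
qed

lemma kernel_ideal_eq_iff:
  assumes "f \<in> TXA A" "g \<in> TXA A"
  shows "kernel_ideal A f = kernel_ideal A g \<longleftrightarrow> kernel f = kernel g"
  using self_mem_kernel_ideal[OF assms(1)] self_mem_kernel_ideal[OF assms(2)]
  by (auto simp: kernel_ideal_def)

lemma greenR_iff: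
  assumes "A \<noteq> {}" "f \<in> TXA A" "g \<in> TXA A"
  shows "greenR A f g \<longleftrightarrow> kernel f = kernel g"
  using assms by (simp add: greenR_def idealR_eq kernel_ideal_eq_iff)

lemma greenH_iff:
  assumes "A \<noteq> {}" "f \<in> TXA A" "g \<in> TXA A"
  shows "greenH A f g \<longleftrightarrow>
           f = g \<or> (range f = range g \<and> kernel f = kernel g \<and> saturates A (kernel f))"
  using assms by (auto simp: greenH_def greenL_iff greenR_iff)

lemma greenD_iff:
  assumes A: "A \<noteq> {}" and f: "f \<in> TXA A" and g: "g \<in> TXA A"
  shows "greenD A f g \<longleftrightarrow>
           kernel f = kernel g \<or>
           (range f \<approx> range g \<and> saturates A (kernel f) \<and> saturates A (kernel g))"
proof
  assume "greenD A f g"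
  then obtain h where h: "h \<in> TXA A" "greenL A f h" and "kernel h = kernel g"
    using greenR_iff[OF A _ g] by (auto simp: greenD_def)
  moreover have "range h \<approx> range g"
    using \<open>kernel h = kernel g\<close> by (rule kernel_eq_imp_image_eqpoll)
  ultimately show "kernel f = kernel g \<or>
      (range f \<approx> range g \<and> saturates A (kernel f) \<and> saturates A (kernel g))"
    by (auto simp: greenL_iff)
next
  assume "kernel f = kernel g \<or>
      (range f \<approx> range g \<and> saturates A (kernel f) \<and> saturates A (kernel g))"
  then obtain h where "range h = range f" "kernel h = kernel g"
    "f = h \<or> saturates A (kernel f) \<and> saturates A (kernel g)"
    using obtain_range_kernel[of "range f" g] by metis
  moreover from this have h: "h \<in> TXA A"
    using f by (simp add: TXA_def)
  ultimately have "greenL A f h" "greenR A h g"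
    using greenR_iff[OF A h g] by (auto simp: greenL_iff)
  then show "greenD A f g"
    using h by (auto simp: greenD_def)
qed

lemma kernel_or_rank_ideal_imp_range_lepoll:
  assumes "k \<in> kernel_ideal A f \<union> rank_ideal A f"
  shows "range k \<lesssim> range f"
  using assms
proof
  assume "k \<in> kernel_ideal A f"
  then show ?thesis
    by (simp add: kernel_ideal_def kernel_subset_imp_image_lepoll)
next
  assume "k \<in> rank_ideal A f"
  moreover have "f ` A \<lesssim> range f"
    by (simp add: subset_imp_lepoll image_mono)
  ultimately show ?thesis
    by (auto simp: rank_ideal_def intro: lepoll_trans)
qed

lemma rank_ideal_cong: "f ` A \<approx> g ` A \<Longrightarrow> rank_ideal A f = rank_ideal A g"
  unfolding rank_ideal_def by (meson eqpoll_imp_lepoll eqpoll_sym lepoll_trans)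

lemma kernel_ideal_subset_rank_ideal:
  assumes "range f \<lesssim> f ` A"
  shows "kernel_ideal A f \<subseteq> rank_ideal A f"
proof
  fix k assume k: "k \<in> kernel_ideal A f"
  then have "range k \<lesssim> f ` A"
    using kernel_or_rank_ideal_imp_range_lepoll[of k] assms by (blast intro: lepoll_trans)
  with k show "k \<in> rank_ideal A f"
    by (simp add: kernel_ideal_def rank_ideal_def)
qed

lemma inj_TXA_imp_range_lepoll_image:
  assumes "f \<in> TXA A" "inj f"
  shows "range f \<lesssim> f ` A"
proof -
  have "range f \<approx> f ` range f"
    using assms(2) by (simp add: eqpoll_sym inj_on_image_eqpoll_self inj_on_subset)
  moreover have "f ` range f \<subseteq> f ` A"
    using assms(1) by (auto simp: TXA_def)
  ultimately show ?thesis
    by (meson eqpoll_imp_lepoll lepoll_trans subset_imp_lepoll)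
qed

lemma fun_upd_collision:
  assumes "x \<noteq> y" "f x = f y" "z \<in> range f" "z \<noteq> f x"
  shows "range (f(x := z)) = range f" "\<not> kernel f \<subseteq> kernel (f(x := z))"
proof -
  have "f u \<in> range (f(x := z))" for u
    using assms(1,2) by (cases "u = x") (metis fun_upd_other rangeI)+
  then show "range (f(x := z)) = range f"
    using assms(3) by auto
  show "\<not> kernel f \<subseteq> kernel (f(x := z))"
    using assms by (auto simp: kernel_def)
qed

lemma idealJ_eq_imp_range_eqpoll:
  assumes "A \<noteq> {}" "f \<in> TXA A" "g \<in> TXA A" "idealJ A f = idealJ A g"
  shows "range f \<approx> range g"
proof -
  have "f \<in> idealJ A g" "g \<in> idealJ A f"
    using assms self_mem_kernel_ideal by (auto simp: idealJ_eq)
  then show ?thesis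
    using assms(1-3) by (simp add: idealJ_eq kernel_or_rank_ideal_imp_range_lepoll lepoll_antisym)
qed

text \<open>If \<open>rank f > |Af|\<close> but \<open>rank g \<le> |Ag|\<close>, then \<open>f\<close> is not injective, and changing it
  at one point of a non-trivial kernel class keeps its image but breaks \<open>ker f \<subseteq> ker k\<close>; this
  gives a map in \<open>T\<^sup>1gT\<^sup>1\<close> but not in \<open>T\<^sup>1fT\<^sup>1\<close>. If both inequalities fail, \<open>f\<close> and \<open>g\<close> can only
  lie in each other's kernel ideals, forcing \<open>ker f = ker g\<close>.\<close>
lemma idealJ_eq_imp_range_lepoll_image:
  assumes A: "A \<noteq> {}" and f: "f \<in> TXA A" and g: "g \<in> TXA A"
    and J: "kernel_ideal A f \<union> rank_ideal A f = kernel_ideal A g \<union> rank_ideal A g"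
    and "kernel f \<noteq> kernel g" and fg: "range f \<approx> range g"
  shows "range f \<lesssim> f ` A"
proof (rule ccontr)
  assume nf: "\<not> range f \<lesssim> f ` A"
  show False
  proof (cases "range g \<lesssim> g ` A")
    case True
    have "\<not> inj f"
      using nf inj_TXA_imp_range_lepoll_image[OF f] by blast
    then obtain x y where xy: "x \<noteq> y" "f x = f y"
      unfolding inj_def by blast
    obtain z where z: "z \<in> range f" "z \<noteq> f x"
    proof (rule ccontr)
      assume no_other: "\<not> thesis"
      obtain a where "a \<in> A"
        using A by blast
      have "range f \<subseteq> f ` A"
      proof
        fix w assume "w \<in> range f"
        then have "w = f a"
          using no_other that[of w] that[of "f a"] by fastforce
        then show "w \<in> f ` A"
          using \<open>a \<in> A\<close> by simp
      qed
      then show False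
        using nf subset_imp_lepoll by blast
    qed
    let ?k = "f(x := z)"
    have rk: "range ?k = range f" and nk: "\<not> kernel f \<subseteq> kernel ?k"
      using fun_upd_collision[OF xy z] by simp_all
    have "range ?k \<subseteq> A"
      using rk f by (simp add: TXA_def)
    moreover have "range ?k \<lesssim> g ` A"
      unfolding rk using fg True by (rule lepoll_trans1)
    ultimately have "?k \<in> rank_ideal A g"
      by (simp add: rank_ideal_def)
    moreover have "?k \<notin> kernel_ideal A f \<union> rank_ideal A f"
      using nk rk nf by (simp add: kernel_ideal_def rank_ideal_def)
    ultimately show False
      using J by blast
  next
    case False
    have "\<not> range f \<lesssim> g ` A"
      using False lepoll_trans1[OF eqpoll_sym[OF fg]] by blast
    moreover have "\<not> range g \<lesssim> f ` A"
      using nf lepoll_trans1[OF fg] by blast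
    ultimately have "f \<notin> rank_ideal A g" "g \<notin> rank_ideal A f"
      by (simp_all add: rank_ideal_def)
    then have "f \<in> kernel_ideal A g" "g \<in> kernel_ideal A f"
      using J self_mem_kernel_ideal[OF f] self_mem_kernel_ideal[OF g] by blast+
    then show False
      using \<open>kernel f \<noteq> kernel g\<close> by (auto simp: kernel_ideal_def)
  qed
qed

lemma greenJ_iff:
  assumes A: "A \<noteq> {}" and f: "f \<in> TXA A" and g: "g \<in> TXA A"
  shows "greenJ A f g \<longleftrightarrow>
           kernel f = kernel g \<or> (f ` A \<approx> range f \<and> range f \<approx> range g \<and> range g \<approx> g ` A)"
proof
  assume "greenJ A f g"
  then have J: "kernel_ideal A f \<union> rank_ideal A f = kernel_ideal A g \<union> rank_ideal A g"
    and fg: "range f \<approx> range g"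
    using idealJ_eq_imp_range_eqpoll[OF A f g] by (simp_all add: greenJ_def idealJ_eq A f g)
  show "kernel f = kernel g \<or> (f ` A \<approx> range f \<and> range f \<approx> range g \<and> range g \<approx> g ` A)"
  proof (cases "kernel f = kernel g")
    case False
    have "range f \<lesssim> f ` A"
      using idealJ_eq_imp_range_lepoll_image[OF A f g J False fg] .
    moreover have "range g \<lesssim> g ` A"
      using idealJ_eq_imp_range_lepoll_image[OF A g f J[symmetric] _ eqpoll_sym[OF fg]] False
      by metis
    ultimately show ?thesis
      using fg by (simp add: image_eqpoll_range_iff[symmetric] eqpoll_sym)
  qed simp
next
  assume "kernel f = kernel g \<or> (f ` A \<approx> range f \<and> range f \<approx> range g \<and> range g \<approx> g ` A)"
  then have "kernel_ideal A f \<union> rank_ideal A f = kernel_ideal A g \<union> rank_ideal A g"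
  proof
    assume "kernel f = kernel g"
    then show ?thesis
      using rank_ideal_cong[OF kernel_eq_imp_image_eqpoll[OF \<open>kernel f = kernel g\<close>]]
      by (simp add: kernel_ideal_def)
  next
    assume H: "f ` A \<approx> range f \<and> range f \<approx> range g \<and> range g \<approx> g ` A"
    then have "kernel_ideal A f \<subseteq> rank_ideal A f" "kernel_ideal A g \<subseteq> rank_ideal A g"
      by (simp_all add: kernel_ideal_subset_rank_ideal image_eqpoll_range_iff[symmetric] eqpoll_sym)
    moreover have "rank_ideal A f = rank_ideal A g"
      using H by (meson eqpoll_trans rank_ideal_cong)
    ultimately show ?thesis
      by (simp add: Un_absorb1)
  qed
  then show "greenJ A f g"
    by (simp add: greenJ_def idealJ_eq A f g)
qed

lemma image_eqpoll_range_imp_saturates: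
  assumes "finite A \<or> A = UNIV" "f \<in> TXA A" "f ` A \<approx> range f"
  shows "saturates A (kernel f)"
  unfolding saturates_kernel_iff using assms(1)
proof
  assume "finite A"
  moreover have "range f \<subseteq> A"
    using assms(2) by (simp add: TXA_def)
  ultimately have "finite (range f)"
    by (rule finite_subset[rotated])
  moreover have "card (f ` A) = card (range f)"
    using assms(3) \<open>finite (range f)\<close> \<open>finite A\<close> by (simp add: eqpoll_iff_card)
  ultimately show "range f \<subseteq> f ` A"
    by (metis card_subset_eq image_mono subset_UNIV)
qed simp

lemma greenD_iff_greenJ_of_finite_or_UNIV:
  assumes "A \<noteq> {}" "finite A \<or> A = UNIV" "f \<in> TXA A" "g \<in> TXA A"
  shows "greenD A f g \<longleftrightarrow> greenJ A f g"
proof -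
  have "saturates A (kernel h) \<longleftrightarrow> h ` A \<approx> range h" if "h \<in> TXA A" for h
  proof
    assume "saturates A (kernel h)"
    then have "h ` A = range h"
      by (auto simp: saturates_kernel_iff)
    then show "h ` A \<approx> range h"
      by simp
  qed (rule image_eqpoll_range_imp_saturates[OF assms(2) that])
  then show ?thesis
    using assms by (auto simp: greenD_iff greenJ_iff eqpoll_sym)
qed

lemma obtain_greenJ_not_greenD:
  assumes "infinite A" "A \<noteq> UNIV"
  obtains f g where "f \<in> TXA A" "g \<in> TXA A" "greenJ A f g" "\<not> greenD A f g"
proof -
  obtain b where b: "b \<notin> A"
    using assms(2) by blast
  obtain a\<^sub>0 where a\<^sub>0: "a\<^sub>0 \<in> A"
    using assms(1) by (cases "A = {}") auto
  have "A \<approx> A - {a\<^sub>0}"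
    using infinite_insert_eqpoll[of "A - {a\<^sub>0}" a\<^sub>0] assms(1) a\<^sub>0 by (simp add: insert_absorb)
  then obtain \<sigma> where \<sigma>: "bij_betw \<sigma> A (A - {a\<^sub>0})"
    unfolding eqpoll_def by blast
  define f where "f = (\<lambda>x. if x \<in> A then \<sigma> x else a\<^sub>0)"
  define g where "g = (\<lambda>x. if x \<in> A then x else a\<^sub>0)"
  have fA: "f ` A = A - {a\<^sub>0}"
    using \<sigma> by (simp add: f_def bij_betw_def)
  have rf: "range f = A"
  proof
    show "range f \<subseteq> A"
      using \<sigma> a\<^sub>0 by (auto simp: f_def bij_betw_def)
    have "a\<^sub>0 = f b"
      using b by (simp add: f_def)
    then have "A = insert (f b) (f ` A)"
      using fA a\<^sub>0 by auto
    then show "A \<subseteq> range f"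
      by auto
  qed
  have gA: "g ` A = A" and rg: "range g = A"
    using a\<^sub>0 by (auto simp: g_def)
  have f: "f \<in> TXA A" and g: "g \<in> TXA A"
    using rf rg by (simp_all add: TXA_def)
  have "A \<noteq> {}"
    using a\<^sub>0 by blast
  have "\<not> saturates A (kernel f)"
    unfolding saturates_kernel_iff fA rf using a\<^sub>0 by blast
  moreover have "saturates A (kernel g)"
    using gA rg by (simp add: saturates_kernel_iff)
  ultimately have "kernel f \<noteq> kernel g"
    by metis
  then have "\<not> greenD A f g"
    using \<open>\<not> saturates A (kernel f)\<close> by (simp add: greenD_iff[OF \<open>A \<noteq> {}\<close> f g])
  moreover have "greenJ A f g"
    using \<open>A \<approx> A - {a\<^sub>0}\<close> fA rf gA rg
    by (simp add: greenJ_iff[OF \<open>A \<noteq> {}\<close> f g] eqpoll_sym)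
  ultimately show thesis
    using f g that by blast
qed

lemma greenD_eq_greenJ_iff:
  assumes "A \<noteq> {}"
  shows "(\<forall>f \<in> TXA A. \<forall>g \<in> TXA A. greenD A f g \<longleftrightarrow> greenJ A f g) \<longleftrightarrow> finite A \<or> A = UNIV"
proof
  assume all: "\<forall>f \<in> TXA A. \<forall>g \<in> TXA A. greenD A f g \<longleftrightarrow> greenJ A f g"
  show "finite A \<or> A = UNIV"
  proof (rule ccontr)
    assume "\<not> (finite A \<or> A = UNIV)"
    then obtain f g where "f \<in> TXA A" "g \<in> TXA A" "greenJ A f g" "\<not> greenD A f g"
      using obtain_greenJ_not_greenD by blast
    with all show False
      by blast
  qed
qed (simp add: greenD_iff_greenJ_of_finite_or_UNIV[OF assms])

theorem theorem5p4:
  fixes A :: "'a set" and f g :: "'a \<Rightarrow> 'a"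
  assumes "A \<noteq> {}" and "f \<in> TXA A" and "g \<in> TXA A"
  shows "(greenL A f g \<longleftrightarrow>
            f = g \<or> (range f = range g \<and> saturates A (kernel f) \<and> saturates A (kernel g)))
       \<and> (greenR A f g \<longleftrightarrow> kernel f = kernel g)
       \<and> (greenH A f g \<longleftrightarrow>
            f = g \<or> (range f = range g \<and> kernel f = kernel g \<and> saturates A (kernel f)))
       \<and> (greenD A f g \<longleftrightarrow>
            kernel f = kernel g \<or> (range f \<approx> range g \<and> saturates A (kernel f) \<and> saturates A (kernel g)))
       \<and> (greenJ A f g \<longleftrightarrow>
            kernel f = kernel g \<or> (f ` A \<approx> range f \<and> range f \<approx> range g \<and> range g \<approx> g ` A))
       \<and> ((\<forall>f' \<in> TXA A. \<forall>g' \<in> TXA A. greenD A f' g' \<longleftrightarrow> greenJ A f' g')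
            \<longleftrightarrow> finite A \<or> A = UNIV)"
  by (intro conjI greenL_iff greenR_iff[OF assms] greenH_iff[OF assms] greenD_iff[OF assms]
      greenJ_iff[OF assms] greenD_eq_greenJ_iff[OF assms(1)])

end
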